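(* The variety of super-paraorthomodular lattices is not the largest subvariety of the variety of pseudo-Kleene lattices that contains no member isomorphic to $\mathbf B_6$ or to $\mathbf B_8$; that is, there is a variety $\mathcal V$ of pseudo-Kleene lattices containing no member isomorphic to $\mathbf B_6$ or to $\mathbf B_8$ such that $\mathcal V$ is not contained in the variety of super-paraorthomodular lattices.
   Context: A pseudo-Kleene lattice is an algebra $(A,\land,\lor,{}',0,1)$ that is a bounded lattice with an antitone involution ${}'$ ($x\leq y\Rightarrow y'\leq x'$, $x''=x$) satisfying $x\land x'\leq y\lor y'$. It is super-paraorthomodular if for all $x,y$: (SP1) $x\leq y$ and $x'\land y=(x\land x')\lor(y\land y')$ imply $y\land(x\lor x')=x\lor(y\land y')$; (SP2) $x\leq y$ implies $(x\land x')\lor(y\land y')=(x'\land y)\land(x'\land y)'$; super-paraorthomodular lattices form a variety. $\mathbf B_6$: the pseudo-Kleene lattice with elements $0,x,y,y',x',1$, covers $0\prec x\prec y\prec 1$, $0\prec y'\prec x'\prec 1$, involution $u\leftrightarrow u'$, $0\leftrightarrow1$. $\mathbf B_8$: elements $0,z',x,y,y',x',z,1$, covers $0\prec z'$, $z'\prec x\prec y\prec z$, $z'\prec y'\prec x'\prec z$, $z\prec 1$, involution $u\leftrightarrow u'$, $0\leftrightarrow 1$. *)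

theory Defs
  imports Main
begin

record 'a palg =
  carrier :: "'a set"
  pmeet :: "'a \<Rightarrow> 'a \<Rightarrow> 'a"
  pjoin :: "'a \<Rightarrow> 'a \<Rightarrow> 'a"
  pneg  :: "'a \<Rightarrow> 'a"
  pzero :: 'a
  pone  :: 'a

definition pleq :: "'a palg \<Rightarrow> 'a \<Rightarrow> 'a \<Rightarrow> bool" where
  "pleq A x y \<longleftrightarrow> pmeet A x y = x"

definition is_pkl :: "'a palg \<Rightarrow> bool" where
  "is_pkl A \<longleftrightarrow>
     pzero A \<in> carrier A \<and> pone A \<in> carrier A \<and>
     (\<forall>x\<in>carrier A. \<forall>y\<in>carrier A.
        pmeet A x y \<in> carrier A \<and> pjoin A x y \<in> carrier A) \<and>
     (\<forall>x\<in>carrier A. pneg A x \<in> carrier A) \<and>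
     \<comment> \<open>lattice axioms\<close>
     (\<forall>x\<in>carrier A. \<forall>y\<in>carrier A.
        pmeet A x y = pmeet A y x \<and> pjoin A x y = pjoin A y x \<and>
        pmeet A x (pjoin A x y) = x \<and> pjoin A x (pmeet A x y) = x) \<and>
     (\<forall>x\<in>carrier A. \<forall>y\<in>carrier A. \<forall>z\<in>carrier A.
        pmeet A x (pmeet A y z) = pmeet A (pmeet A x y) z \<and>
        pjoin A x (pjoin A y z) = pjoin A (pjoin A x y) z) \<and>
     \<comment> \<open>bounds\<close>
     (\<forall>x\<in>carrier A. pmeet A (pzero A) x = pzero A \<and> pjoin A (pone A) x = pone A) \<and>
     \<comment> \<open>antitone involution\<close>
     (\<forall>x\<in>carrier A. pneg A (pneg A x) = x) \<and>
     (\<forall>x\<in>carrier A. \<forall>y\<in>carrier A. pleq A x y \<longrightarrow> pleq A (pneg A y) (pneg A x)) \<and>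
     \<comment> \<open>Kleene-type condition\<close>
     (\<forall>x\<in>carrier A. \<forall>y\<in>carrier A.
        pleq A (pmeet A x (pneg A x)) (pjoin A y (pneg A y)))"

definition super_paraorthomodular :: "'a palg \<Rightarrow> bool" where
  "super_paraorthomodular A \<longleftrightarrow> is_pkl A \<and>
     (\<forall>x\<in>carrier A. \<forall>y\<in>carrier A.
        pleq A x y \<and>
        pmeet A (pneg A x) y = pjoin A (pmeet A x (pneg A x)) (pmeet A y (pneg A y))
        \<longrightarrow> pmeet A y (pjoin A x (pneg A x)) = pjoin A x (pmeet A y (pneg A y))) \<and>
     (\<forall>x\<in>carrier A. \<forall>y\<in>carrier A.
        pleq A x y \<longrightarrow>
        pjoin A (pmeet A x (pneg A x)) (pmeet A y (pneg A y)) =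
        pmeet A (pmeet A (pneg A x) y) (pneg A (pmeet A (pneg A x) y)))"

datatype trm = Var nat | Meet trm trm | Join trm trm | Neg trm | Zero | One

fun eval :: "'a palg \<Rightarrow> (nat \<Rightarrow> 'a) \<Rightarrow> trm \<Rightarrow> 'a" where
  "eval A v (Var i) = v i"
| "eval A v (Meet s t) = pmeet A (eval A v s) (eval A v t)"
| "eval A v (Join s t) = pjoin A (eval A v s) (eval A v t)"
| "eval A v (Neg s) = pneg A (eval A v s)"
| "eval A v Zero = pzero A"
| "eval A v One = pone A"

definition satisfies :: "'a palg \<Rightarrow> trm \<times> trm \<Rightarrow> bool" where
  "satisfies A e \<longleftrightarrow>
     (\<forall>v. (\<forall>i. v i \<in> carrier A) \<longrightarrow> eval A v (fst e) = eval A v (snd e))"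

text \<open>Membership in the variety of pseudo-Kleene lattices axiomatised (relative
  to pseudo-Kleene lattices) by the set of identities E.  Every variety of
  pseudo-Kleene lattices is of this form.\<close>
definition in_variety :: "(trm \<times> trm) set \<Rightarrow> 'a palg \<Rightarrow> bool" where
  "in_variety E A \<longleftrightarrow> is_pkl A \<and> (\<forall>e\<in>E. satisfies A e)"

definition op_from_order :: "('a \<Rightarrow> 'a \<Rightarrow> bool) \<Rightarrow> 'a \<Rightarrow> 'a \<Rightarrow> 'a \<Rightarrow> 'a" where
  "op_from_order le d a b = (if le a b then a else if le b a then b else d)"

datatype b6 = B6_0 | B6_x | B6_y | B6_y' | B6_x' | B6_1

fun b6_rank :: "b6 \<Rightarrow> nat" where
  "b6_rank B6_0 = 0" | "b6_rank B6_x = 1" | "b6_rank B6_y = 2"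
| "b6_rank B6_y' = 1" | "b6_rank B6_x' = 2" | "b6_rank B6_1 = 3"

fun b6_side :: "b6 \<Rightarrow> nat" where
  "b6_side B6_x = 1" | "b6_side B6_y = 1" | "b6_side B6_y' = 2" | "b6_side B6_x' = 2"
| "b6_side _ = 0"

text \<open>Order of B6: chains 0 < x < y < 1 and 0 < y' < x' < 1.\<close>
definition b6_le :: "b6 \<Rightarrow> b6 \<Rightarrow> bool" where
  "b6_le a b \<longleftrightarrow> a = B6_0 \<or> b = B6_1 \<or> (b6_side a = b6_side b \<and> b6_rank a \<le> b6_rank b)"

fun b6_neg :: "b6 \<Rightarrow> b6" where
  "b6_neg B6_0 = B6_1" | "b6_neg B6_1 = B6_0" | "b6_neg B6_x = B6_x'" | "b6_neg B6_x' = B6_x"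
| "b6_neg B6_y = B6_y'" | "b6_neg B6_y' = B6_y"

definition B6 :: "b6 palg" where
  "B6 = \<lparr>carrier = UNIV, pmeet = op_from_order b6_le B6_0,
         pjoin = op_from_order (\<lambda>a b. b6_le b a) B6_1,
         pneg = b6_neg, pzero = B6_0, pone = B6_1\<rparr>"

datatype b8 = B8_0 | B8_z' | B8_x | B8_y | B8_y' | B8_x' | B8_z | B8_1

fun b8_rank :: "b8 \<Rightarrow> nat" where
  "b8_rank B8_0 = 0" | "b8_rank B8_z' = 1" | "b8_rank B8_x = 2" | "b8_rank B8_y = 3"
| "b8_rank B8_y' = 2" | "b8_rank B8_x' = 3" | "b8_rank B8_z = 4" | "b8_rank B8_1 = 5"

fun b8_side :: "b8 \<Rightarrow> nat" where
  "b8_side B8_x = 1" | "b8_side B8_y = 1" | "b8_side B8_y' = 2" | "b8_side B8_x' = 2"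
| "b8_side _ = 0"

text \<open>Order of B8: 0 < z' < x < y < z < 1 and z' < y' < x' < z.\<close>
definition b8_le :: "b8 \<Rightarrow> b8 \<Rightarrow> bool" where
  "b8_le a b \<longleftrightarrow> b8_rank a \<le> b8_rank b \<and>
     (b8_side a = 0 \<or> b8_side b = 0 \<or> b8_side a = b8_side b)"

fun b8_neg :: "b8 \<Rightarrow> b8" where
  "b8_neg B8_0 = B8_1" | "b8_neg B8_1 = B8_0" | "b8_neg B8_z = B8_z'" | "b8_neg B8_z' = B8_z"
| "b8_neg B8_x = B8_x'" | "b8_neg B8_x' = B8_x" | "b8_neg B8_y = B8_y'" | "b8_neg B8_y' = B8_y"

definition B8 :: "b8 palg" where
  "B8 = \<lparr>carrier = UNIV, pmeet = op_from_order b8_le B8_z',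
         pjoin = op_from_order (\<lambda>a b. b8_le b a) B8_z,
         pneg = b8_neg, pzero = B8_0, pone = B8_1\<rparr>"

end

theory Submission
  imports Defs
begin

(* The witness is an eight-element pseudo-Kleene lattice D8 with atoms 1 and 2 and order
   0 < 1 < 3 < 4 < 7,  3 < 5 < 6 < 7,  0 < 2 < 5,  and involution
   0 <-> 7, 1 <-> 6, 2 <-> 4, 3 <-> 5.
   D8 violates (SP2) at x = 1 <= y = 4, yet it satisfies the two-variable identity
   x /\ ((x /\ y) \/ x' \/ y') = x /\ ((x /\ y) \/ y'),
   which fails in B6 and in B8 at (x, y) := (y, x').  The variety axiomatised by this
   identity therefore contains D8 but neither B6 nor B8. *)

definition separating_identity :: "trm \<times> trm" where
  "separating_identity =
    (Meet (Join (Join (Meet (Var 0) (Var 1)) (Neg (Var 0))) (Neg (Var 1))) (Var 0),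
     Meet (Join (Meet (Var 0) (Var 1)) (Neg (Var 1))) (Var 0))"

lemma satisfies_separating_identity_iff:
  "satisfies A separating_identity \<longleftrightarrow>
     (\<forall>a\<in>carrier A. \<forall>b\<in>carrier A.
        pmeet A (pjoin A (pjoin A (pmeet A a b) (pneg A a)) (pneg A b)) a =
        pmeet A (pjoin A (pmeet A a b) (pneg A b)) a)"
proof
  assume sat: "satisfies A separating_identity"
  show "\<forall>a\<in>carrier A. \<forall>b\<in>carrier A.
          pmeet A (pjoin A (pjoin A (pmeet A a b) (pneg A a)) (pneg A b)) a =
          pmeet A (pjoin A (pmeet A a b) (pneg A b)) a"
  proof (intro ballI)
    fix a b
    assume "a \<in> carrier A" "b \<in> carrier A"
    define v where "v i = (if i = 0 then a else b)" for i :: nat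
    have "\<forall>i. v i \<in> carrier A"
      using \<open>a \<in> carrier A\<close> \<open>b \<in> carrier A\<close> by (simp add: v_def)
    with sat have "eval A v (fst separating_identity) = eval A v (snd separating_identity)"
      unfolding satisfies_def by blast
    then show "pmeet A (pjoin A (pjoin A (pmeet A a b) (pneg A a)) (pneg A b)) a =
               pmeet A (pjoin A (pmeet A a b) (pneg A b)) a"
      by (simp add: separating_identity_def v_def)
  qed
next
  assume "\<forall>a\<in>carrier A. \<forall>b\<in>carrier A.
            pmeet A (pjoin A (pjoin A (pmeet A a b) (pneg A a)) (pneg A b)) a =
            pmeet A (pjoin A (pmeet A a b) (pneg A b)) a"
  then show "satisfies A separating_identity"
    unfolding satisfies_def separating_identity_def by simp
qed

lemma not_satisfies_separating_identityI:
  assumes "a \<in> carrier A" "b \<in> carrier A"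
    and "pmeet A (pjoin A (pjoin A (pmeet A a b) (pneg A a)) (pneg A b)) a \<noteq>
         pmeet A (pjoin A (pmeet A a b) (pneg A b)) a"
  shows "\<not> satisfies A separating_identity"
  using assms unfolding satisfies_separating_identity_iff by blast

lemma ball_lessThan_8_nat:
  "(\<forall>x\<in>{..<8::nat}. P x) \<longleftrightarrow> P 0 \<and> P 1 \<and> P 2 \<and> P 3 \<and> P 4 \<and> P 5 \<and> P 6 \<and> P 7"
proof -
  have "{..<8::nat} = {0, 1, 2, 3, 4, 5, 6, 7}" by auto
  then show ?thesis by simp
qed

definition d8_meet :: "nat list list" where
  "d8_meet =
    [[0, 0, 0, 0, 0, 0, 0, 0], [0, 1, 0, 1, 1, 1, 1, 1], [0, 0, 2, 0, 0, 2, 2, 2],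
     [0, 1, 0, 3, 3, 3, 3, 3], [0, 1, 0, 3, 4, 3, 3, 4], [0, 1, 2, 3, 3, 5, 5, 5],
     [0, 1, 2, 3, 3, 5, 6, 6], [0, 1, 2, 3, 4, 5, 6, 7]]"

definition d8_join :: "nat list list" where
  "d8_join =
    [[0, 1, 2, 3, 4, 5, 6, 7], [1, 1, 5, 3, 4, 5, 6, 7], [2, 5, 2, 5, 7, 5, 6, 7],
     [3, 3, 5, 3, 4, 5, 6, 7], [4, 4, 7, 4, 4, 7, 7, 7], [5, 5, 5, 5, 7, 5, 6, 7],
     [6, 6, 6, 6, 7, 6, 6, 7], [7, 7, 7, 7, 7, 7, 7, 7]]"

definition d8_neg :: "nat list" where
  "d8_neg = [7, 6, 4, 5, 2, 3, 1, 0]"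

definition D8 :: "nat palg" where
  "D8 = \<lparr>carrier = {..<8}, pmeet = (\<lambda>a b. d8_meet ! a ! b), pjoin = (\<lambda>a b. d8_join ! a ! b),
         pneg = (\<lambda>a. d8_neg ! a), pzero = 0, pone = 7\<rparr>"

lemma is_pkl_D8: "is_pkl D8"
  unfolding is_pkl_def pleq_def D8_def
  by (simp only: palg.simps ball_lessThan_8_nat) (simp add: d8_meet_def d8_join_def d8_neg_def)

lemma satisfies_separating_identity_D8: "satisfies D8 separating_identity"
  unfolding satisfies_separating_identity_iff D8_def
  by (simp only: palg.simps ball_lessThan_8_nat) (simp add: d8_meet_def d8_join_def d8_neg_def)

lemma not_super_paraorthomodular_D8: "\<not> super_paraorthomodular D8"
proof
  assume "super_paraorthomodular D8"
  moreover have "(1::nat) \<in> carrier D8" "(4::nat) \<in> carrier D8"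
    by (simp_all add: D8_def)
  ultimately have "pleq D8 1 4 \<longrightarrow>
      pjoin D8 (pmeet D8 1 (pneg D8 1)) (pmeet D8 4 (pneg D8 4)) =
      pmeet D8 (pmeet D8 (pneg D8 1) 4) (pneg D8 (pmeet D8 (pneg D8 1) 4))"
    unfolding super_paraorthomodular_def by blast
  then show False
    by (simp add: pleq_def D8_def d8_meet_def d8_join_def d8_neg_def)
qed

lemma not_satisfies_separating_identity_B6: "\<not> satisfies B6 separating_identity"
  by (rule not_satisfies_separating_identityI[of B6_y _ B6_x'])
     (simp_all add: B6_def op_from_order_def b6_le_def)

lemma not_satisfies_separating_identity_B8: "\<not> satisfies B8 separating_identity"
  by (rule not_satisfies_separating_identityI[of B8_y _ B8_x'])
     (simp_all add: B8_def op_from_order_def b8_le_def)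

theorem lemma4p4:
  shows "\<exists>E :: (trm \<times> trm) set.
           \<not> in_variety E B6 \<and> \<not> in_variety E B8 \<and>
           (\<exists>A :: nat palg. in_variety E A \<and> \<not> super_paraorthomodular A)"
proof (intro exI conjI)
  let ?E = "{separating_identity}"
  show "\<not> in_variety ?E B6"
    using not_satisfies_separating_identity_B6 by (simp add: in_variety_def)
  show "\<not> in_variety ?E B8"
    using not_satisfies_separating_identity_B8 by (simp add: in_variety_def)
  show "in_variety ?E D8"
    using is_pkl_D8 satisfies_separating_identity_D8 by (simp add: in_variety_def)
  show "\<not> super_paraorthomodular D8"
    by (rule not_super_paraorthomodular_D8)
qed

end
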